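(* Let $\mathbb{K}\in\{\mathbb{R},\mathbb{C}\}$ and let $\mathcal{X}$ be a topological $\mathbb{K}$-vector space whose topological dual $\mathcal{X}^{\ast}$ separates the points of $\mathcal{X}$. Let $F_1,F_2$ be nonempty weak*-closed subsets of $\mathcal{X}^{\ast}$ such that $d_H^{(A)}(F_1,F_2)=0$ for all $A\in\mathcal{X}$. Then $\overline{\mathrm{co}}F_1=\overline{\mathrm{co}}F_2$.
   Context: Topological vector spaces are Hausdorff. $\mathcal{X}^{\ast}$ carries the weak* topology. For nonempty weak*-closed $F,\tilde F\subseteq\mathcal{X}^{\ast}$ and $A\in\mathcal{X}$, $d_H^{(A)}(F,\tilde F)=\max\{\sup_{\sigma\in F}\inf_{\tilde\sigma\in\tilde F}|(\sigma-\tilde\sigma)(A)|,\ \sup_{\tilde\sigma\in\tilde F}\inf_{\sigma\in F}|(\sigma-\tilde\sigma)(A)|\}\in[0,\infty]$. $\overline{\mathrm{co}}F$ denotes the weak*-closure of the convex hull of $F$. *)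

theory Defs
  imports "HOL-Analysis.Analysis"
begin

definition tvs :: "('k::real_normed_field \<Rightarrow> 'a::ab_group_add \<Rightarrow> 'a) \<Rightarrow> 'a topology \<Rightarrow> bool" where
  "tvs smul T \<longleftrightarrow>
     Vector_Spaces.vector_space smul \<and> topspace T = UNIV \<and> Hausdorff_space T \<and>
     continuous_map (prod_topology T T) T (\<lambda>(x, y). x + y) \<and>
     continuous_map (prod_topology euclidean T) T (\<lambda>(c, x). smul c x)"

definition tvs_dual :: "('k::real_normed_field \<Rightarrow> 'a::ab_group_add \<Rightarrow> 'a) \<Rightarrow> 'a topology \<Rightarrow> ('a \<Rightarrow> 'k) set" where
  "tvs_dual smul T = {f. Vector_Spaces.linear smul ((*)) f \<and> continuous_map T euclidean f}"

definition dual_separates_points :: "('k::real_normed_field \<Rightarrow> 'a::ab_group_add \<Rightarrow> 'a) \<Rightarrow> 'a topology \<Rightarrow> bool" where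
  "dual_separates_points smul T \<longleftrightarrow> (\<forall>x y. x \<noteq> y \<longrightarrow> (\<exists>f\<in>tvs_dual smul T. f x \<noteq> f y))"

definition weak_star_topology :: "('k::real_normed_field \<Rightarrow> 'a::ab_group_add \<Rightarrow> 'a) \<Rightarrow> 'a topology \<Rightarrow> ('a \<Rightarrow> 'k) topology" where
  "weak_star_topology smul T = subtopology (product_topology (\<lambda>_. euclidean) UNIV) (tvs_dual smul T)"

definition fun_convex_hull :: "('a \<Rightarrow> 'k::real_normed_field) set \<Rightarrow> ('a \<Rightarrow> 'k) set" where
  "fun_convex_hull F =
     {(\<lambda>x. \<Sum>i\<in>I. of_real (c i) * s i x) | (I :: nat set) c s.
        finite I \<and> (\<forall>i\<in>I. 0 \<le> c i \<and> s i \<in> F) \<and> sum c I = 1}"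

definition closed_convex_hull_ws :: "('k::real_normed_field \<Rightarrow> 'a::ab_group_add \<Rightarrow> 'a) \<Rightarrow> 'a topology \<Rightarrow> ('a \<Rightarrow> 'k) set \<Rightarrow> ('a \<Rightarrow> 'k) set" where
  "closed_convex_hull_ws smul T F = weak_star_topology smul T closure_of fun_convex_hull F"

definition hausdorff_dist_at :: "'a \<Rightarrow> ('a \<Rightarrow> 'k::real_normed_field) set \<Rightarrow> ('a \<Rightarrow> 'k) set \<Rightarrow> ereal" where
  "hausdorff_dist_at A F G =
     max (SUP \<sigma>\<in>F. INF \<tau>\<in>G. ereal (norm ((\<sigma> A) - (\<tau> A))))
         (SUP \<tau>\<in>G. INF \<sigma>\<in>F. ereal (norm ((\<sigma> A) - (\<tau> A))))"

end

theory Submission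
  imports Defs
begin

text \<open>
  If the pseudo-distances d_H^(A)(F_1, F_2) vanish, every functional of F_2 can be approximated at
  any single point A by functionals of F_1, and, by averaging, every functional of co F_2 by
  functionals of co F_1. Weak* approximation needs this simultaneously at finitely many points
  A_1, ..., A_n. Send co F_1 to the convex set of real vectors (Re (u \<sigma>(A_j)))_(j,u), with u = 1
  (and u = i over the complex numbers). If the vector p of \<tau> had positive distance from that
  set, the nearest point x of its closure would make c = p - x a separating functional. But by
  linearity c applied to the vector of \<sigma> is Re \<sigma>(B) for the single point B = \<Sum> c_(j,u) u A_j,
  at which \<tau> is approximable. Hence co F_2 lies in the weak* closure of co F_1, and by symmetry
  the closed convex hulls coincide.
\<close>

section \<open>Nearest points of convex sets of real vectors\<close>

text \<open>Function spaces carry no real_vector instance, so convexity is stated coordinatewise.\<close>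
definition pointwise_convex :: "('i \<Rightarrow> 'k::real_normed_field) set \<Rightarrow> bool" where
  "pointwise_convex S \<longleftrightarrow>
     (\<forall>x\<in>S. \<forall>y\<in>S. \<forall>t::real. 0 \<le> t \<and> t \<le> 1 \<longrightarrow> (\<lambda>i. of_real (1 - t) * x i + of_real t * y i) \<in> S)"

lemma pointwise_convexD:
  "pointwise_convex S \<Longrightarrow> x \<in> S \<Longrightarrow> y \<in> S \<Longrightarrow> 0 \<le> t \<Longrightarrow> t \<le> 1 \<Longrightarrow>
     (\<lambda>i. of_real (1 - t) * x i + of_real t * y i) \<in> S"
  unfolding pointwise_convex_def by blast

lemma pointwise_convex_midpoint:
  fixes S :: "('i \<Rightarrow> real) set"
  assumes "pointwise_convex S" "x \<in> S" "y \<in> S"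
  shows "(\<lambda>i. (x i + y i) / 2) \<in> S"
  using pointwise_convexD[OF assms, of "1/2"] by (simp add: add_divide_distrib)

definition sq_dist_on :: "'i set \<Rightarrow> ('i \<Rightarrow> real) \<Rightarrow> ('i \<Rightarrow> real) \<Rightarrow> real" where
  "sq_dist_on I x y = (\<Sum>i\<in>I. (x i - y i)\<^sup>2)"

lemma sq_dist_on_nonneg: "0 \<le> sq_dist_on I x y"
  unfolding sq_dist_on_def by (simp add: sum_nonneg)

lemma sq_dist_on_ge_component:
  "finite I \<Longrightarrow> i \<in> I \<Longrightarrow> (x i - y i)\<^sup>2 \<le> sq_dist_on I x y"
  unfolding sq_dist_on_def by (rule member_le_sum) auto

lemma sq_dist_on_parallelogram:
  "sq_dist_on I x y =
     2 * sq_dist_on I x p + 2 * sq_dist_on I y p - 4 * sq_dist_on I (\<lambda>i. (x i + y i) / 2) p"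
  unfolding sq_dist_on_def sum_distrib_left sum_subtractf[symmetric] sum.distrib[symmetric]
  by (rule sum.cong) (auto simp: power2_eq_square algebra_simps)

lemma sq_dist_on_segment:
  "sq_dist_on I (\<lambda>i. (1 - t) * x i + t * y i) p =
     sq_dist_on I x p + 2 * t * (\<Sum>i\<in>I. (x i - p i) * (y i - x i)) + t\<^sup>2 * sq_dist_on I y x"
  unfolding sq_dist_on_def sum_distrib_left sum.distrib[symmetric]
  by (rule sum.cong) (auto simp: power2_eq_square algebra_simps)

lemma nonneg_if_quadratic_nonneg_near_0:
  fixes a M :: real
  assumes "\<And>t. 0 < t \<Longrightarrow> t \<le> 1 \<Longrightarrow> 0 \<le> 2 * t * a + t\<^sup>2 * M"
  shows "0 \<le> a"
proof (rule ccontr)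
  assume "\<not> 0 \<le> a"
  then have "a < 0" by simp
  moreover have "0 \<le> 2 * a + M" using assms[of 1] by simp
  ultimately have "0 < M" "-a \<le> M" by linarith+
  then have M: "0 < M" "-a / M \<le> 1" by (simp_all only: pos_divide_le_eq mult_1_left)
  have "0 \<le> 2 * (-a / M) * a + (-a / M)\<^sup>2 * M"
    using \<open>a < 0\<close> M by (intro assms) (auto simp: divide_neg_pos)
  also have "\<dots> = - (a\<^sup>2 / M)" using M by (simp add: field_simps power2_eq_square)
  also have "\<dots> < 0" using \<open>a < 0\<close> M by simp
  finally show False by simp
qed

lemma sq_dist_on_bdd_below: "bdd_below ((\<lambda>y. sq_dist_on I y p) ` S)"
  by (rule bdd_belowI2[where m=0]) (rule sq_dist_on_nonneg)

lemma INF_sq_dist_on_le: "y \<in> S \<Longrightarrow> (INF z\<in>S. sq_dist_on I z p) \<le> sq_dist_on I y p"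
  by (rule cINF_lower[OF sq_dist_on_bdd_below])

lemma pointwise_convex_minimizing_sequence_Cauchy:
  fixes S :: "('i \<Rightarrow> real) set"
  assumes "finite I" "pointwise_convex S" "\<And>k. X k \<in> S"
    and minimizing: "(\<lambda>k. sq_dist_on I (X k) p) \<longlonglongrightarrow> (INF y\<in>S. sq_dist_on I y p)"
    and "i \<in> I"
  shows "Cauchy (\<lambda>k. X k i)"
proof (rule CauchyI)
  fix e :: real assume "0 < e"
  define d where "d = (INF y\<in>S. sq_dist_on I y p)"
  have d_le: "d \<le> sq_dist_on I y p" if "y \<in> S" for y
    unfolding d_def using that by (rule INF_sq_dist_on_le)
  have "d < d + e\<^sup>2 / 4" using \<open>0 < e\<close> by simp
  then have "\<forall>\<^sub>F k in sequentially. sq_dist_on I (X k) p < d + e\<^sup>2 / 4"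
    using minimizing[folded d_def] by (rule order_tendstoD(2)[rotated])
  then obtain M where M: "\<And>k. M \<le> k \<Longrightarrow> sq_dist_on I (X k) p < d + e\<^sup>2 / 4"
    by (auto simp: eventually_sequentially)
  show "\<exists>M. \<forall>m\<ge>M. \<forall>n\<ge>M. norm (X m i - X n i) < e"
  proof (intro exI allI impI)
    fix m n assume "M \<le> m" "M \<le> n"
    define z where "z = (\<lambda>j. (X m j + X n j) / 2)"
    have "z \<in> S" unfolding z_def using assms(2,3,3) by (rule pointwise_convex_midpoint)
    have "(X m i - X n i)\<^sup>2 \<le> sq_dist_on I (X m) (X n)"
      using assms(1,5) by (rule sq_dist_on_ge_component)
    also have "\<dots> = 2 * sq_dist_on I (X m) p + 2 * sq_dist_on I (X n) p - 4 * sq_dist_on I z p"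
      unfolding z_def by (rule sq_dist_on_parallelogram)
    also have "\<dots> < e\<^sup>2"
      using M[OF \<open>M \<le> m\<close>] M[OF \<open>M \<le> n\<close>] d_le[OF \<open>z \<in> S\<close>] by linarith
    finally have "\<bar>X m i - X n i\<bar>\<^sup>2 < e\<^sup>2" by simp
    then show "norm (X m i - X n i) < e"
      using \<open>0 < e\<close> by (simp add: power2_less_imp_less)
  qed
qed

lemma minimizing_sequence_sq_dist_on:
  assumes "S \<noteq> {}"
  obtains X where "\<And>k. X k \<in> S"
    "(\<lambda>k. sq_dist_on I (X k) p) \<longlonglongrightarrow> (INF y\<in>S. sq_dist_on I y p)"
proof -
  define d where "d = (INF y\<in>S. sq_dist_on I y p)"
  have "\<exists>y\<in>S. sq_dist_on I y p < d + 1 / Suc k" for k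
  proof -
    have "d < d + 1 / Suc k" by simp
    then show ?thesis unfolding d_def cINF_less_iff[OF assms sq_dist_on_bdd_below] .
  qed
  then obtain X where X: "\<And>k. X k \<in> S" "\<And>k. sq_dist_on I (X k) p < d + 1 / Suc k"
    by metis
  have "(\<lambda>k. sq_dist_on I (X k) p) \<longlonglongrightarrow> d"
  proof (rule real_tendsto_sandwich[of "\<lambda>_. d" _ _ "\<lambda>k. d + 1 / Suc k"])
    show "\<forall>\<^sub>F k in sequentially. d \<le> sq_dist_on I (X k) p"
      using X(1) by (simp add: d_def INF_sq_dist_on_le)
    show "\<forall>\<^sub>F k in sequentially. sq_dist_on I (X k) p \<le> d + 1 / Suc k"
      using X(2) by (simp add: less_imp_le)
    show "(\<lambda>k. d + 1 / real (Suc k)) \<longlonglongrightarrow> d"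
      using tendsto_add[OF tendsto_const LIMSEQ_inverse_real_of_nat, of d] by (simp add: inverse_eq_divide)
  qed simp
  with X(1) show thesis unfolding d_def by (rule that)
qed

lemma pointwise_convex_nearest_point:
  fixes S :: "('i \<Rightarrow> real) set"
  assumes "finite I" "pointwise_convex S" "S \<noteq> {}"
  obtains x where "sq_dist_on I x p = (INF y\<in>S. sq_dist_on I y p)"
    and "\<And>y. y \<in> S \<Longrightarrow> 0 \<le> (\<Sum>i\<in>I. (x i - p i) * (y i - x i))"
proof -
  define d where "d = (INF y\<in>S. sq_dist_on I y p)"
  obtain X where X: "\<And>k. X k \<in> S"
    and minimizing: "(\<lambda>k. sq_dist_on I (X k) p) \<longlonglongrightarrow> (INF y\<in>S. sq_dist_on I y p)"
    using minimizing_sequence_sq_dist_on[OF assms(3), where I = I and p = p] by blast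
  have "\<forall>i\<in>I. \<exists>l. (\<lambda>k. X k i) \<longlonglongrightarrow> l"
    using pointwise_convex_minimizing_sequence_Cauchy[OF assms(1,2) X minimizing]
    by (simp add: Cauchy_convergent_iff convergent_def)
  then obtain x where x: "\<And>i. i \<in> I \<Longrightarrow> (\<lambda>k. X k i) \<longlonglongrightarrow> x i" by metis
  have "(\<lambda>k. sq_dist_on I (X k) p) \<longlonglongrightarrow> sq_dist_on I x p"
    unfolding sq_dist_on_def by (intro tendsto_intros x)
  then have x_nearest: "sq_dist_on I x p = d" using minimizing[folded d_def] by (rule LIMSEQ_unique)
  txt \<open>Minimality of x along the segments towards S gives the angle condition.\<close>
  have "0 \<le> (\<Sum>i\<in>I. (x i - p i) * (y i - x i))" if "y \<in> S" for y
  proof (rule nonneg_if_quadratic_nonneg_near_0)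
    fix t :: real assume "0 < t" "t \<le> 1"
    have "(\<lambda>k. sq_dist_on I (\<lambda>i. (1 - t) * X k i + t * y i) p)
            \<longlonglongrightarrow> sq_dist_on I (\<lambda>i. (1 - t) * x i + t * y i) p"
      unfolding sq_dist_on_def by (intro tendsto_intros x)
    moreover have "\<forall>\<^sub>F k in sequentially. d \<le> sq_dist_on I (\<lambda>i. (1 - t) * X k i + t * y i) p"
      using pointwise_convexD[OF assms(2) X \<open>y \<in> S\<close>, of t] \<open>0 < t\<close> \<open>t \<le> 1\<close>
      by (simp add: d_def INF_sq_dist_on_le)
    ultimately have "d \<le> sq_dist_on I (\<lambda>i. (1 - t) * x i + t * y i) p"
      by (rule tendsto_lowerbound) simp
    then show "0 \<le> 2 * t * (\<Sum>i\<in>I. (x i - p i) * (y i - x i)) + t\<^sup>2 * sq_dist_on I y x"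
      unfolding sq_dist_on_segment x_nearest by simp
  qed
  with x_nearest show thesis unfolding d_def by (rule that)
qed

lemma pointwise_convex_approx_if_not_separated:
  fixes S :: "('i \<Rightarrow> real) set"
  assumes "finite I" "pointwise_convex S"
    and not_separated: "\<And>c \<eta>. \<eta> > 0 \<Longrightarrow> \<exists>y\<in>S. -\<eta> \<le> (\<Sum>i\<in>I. c i * (y i - p i))"
    and "\<epsilon> > 0"
  obtains y where "y \<in> S" "sq_dist_on I y p < \<epsilon>"
proof -
  have "S \<noteq> {}" using not_separated[of 1] by auto
  then obtain x where x_nearest: "sq_dist_on I x p = (INF y\<in>S. sq_dist_on I y p)"
    and x_obtuse: "\<And>y. y \<in> S \<Longrightarrow> 0 \<le> (\<Sum>i\<in>I. (x i - p i) * (y i - x i))"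
    using pointwise_convex_nearest_point[OF assms(1,2)] by blast
  txt \<open>p - x separates p from S unless x = p.\<close>
  obtain y where "y \<in> S" and y: "-(\<epsilon> / 2) \<le> (\<Sum>i\<in>I. (p i - x i) * (y i - p i))"
    using not_separated[of "\<epsilon> / 2" "\<lambda>i. p i - x i"] \<open>\<epsilon> > 0\<close> by auto
  have "(\<Sum>i\<in>I. (p i - x i) * (y i - p i))
          = - (\<Sum>i\<in>I. (x i - p i) * (y i - x i)) - sq_dist_on I x p"
    unfolding sq_dist_on_def sum_negf[symmetric] sum_subtractf[symmetric]
    by (rule sum.cong) (auto simp: power2_eq_square algebra_simps)
  with y x_obtuse[OF \<open>y \<in> S\<close>] \<open>\<epsilon> > 0\<close> have "(INF y\<in>S. sq_dist_on I y p) < \<epsilon>"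
    unfolding x_nearest by linarith
  then show thesis
    using that \<open>S \<noteq> {}\<close> by (auto simp: cINF_less_iff[OF _ sq_dist_on_bdd_below])
qed

section \<open>Approximating a functional at finitely many points\<close>

text \<open>
  This is all the proof uses of the scalar field: the norm is the l2-norm of finitely many real
  linear coordinates z \<mapsto> re (u z).
\<close>
definition real_part_frame :: "('k::real_normed_field \<Rightarrow> real) \<Rightarrow> 'k set \<Rightarrow> bool" where
  "real_part_frame re U \<longleftrightarrow>
     bounded_linear re \<and> finite U \<and> (\<forall>z. (norm z)\<^sup>2 = (\<Sum>u\<in>U. (re (u * z))\<^sup>2))"

lemma real_part_frame_real: "real_part_frame (\<lambda>x::real. x) {1}"
  unfolding real_part_frame_def by (simp add: bounded_linear_ident)

lemma real_part_frame_complex: "real_part_frame Re {1, \<i>}"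
  unfolding real_part_frame_def by (simp add: bounded_linear_Re cmod_power2)

lemma bounded_linear_of_real_mult: "bounded_linear re \<Longrightarrow> re (of_real r * z) = r * re z"
  by (simp add: scaleR_conv_of_real[symmetric] linear_scale bounded_linear.linear)

lemma tvs_dual_sum_scale:
  assumes "\<sigma> \<in> tvs_dual smul T"
  shows "\<sigma> (\<Sum>i\<in>I. smul (c i) (v i)) = (\<Sum>i\<in>I. c i * \<sigma> (v i))"
proof -
  have "module_hom smul (*) \<sigma>"
    using assms by (simp add: tvs_dual_def module_hom_iff_linear)
  then show ?thesis by (simp add: module_hom.sum module_hom.scale)
qed

definition real_coords :: "('k::real_normed_field \<Rightarrow> real) \<Rightarrow> ('a \<Rightarrow> 'k) \<Rightarrow> 'a \<times> 'k \<Rightarrow> real" where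
  "real_coords re \<sigma> = (\<lambda>(A, u). re (u * \<sigma> A))"

lemma pointwise_convex_real_coords_image:
  fixes re :: "'k::real_normed_field \<Rightarrow> real" and P :: "('a \<Rightarrow> 'k) set"
  assumes re: "bounded_linear re" and "pointwise_convex P"
  shows "pointwise_convex (real_coords re ` P)"
  unfolding pointwise_convex_def
proof clarify
  fix \<sigma>1 \<sigma>2 and t :: real assume "\<sigma>1 \<in> P" "\<sigma>2 \<in> P" "0 \<le> t" "t \<le> 1"
  with \<open>pointwise_convex P\<close> have "(\<lambda>A. of_real (1 - t) * \<sigma>1 A + of_real t * \<sigma>2 A) \<in> P"
    by (rule pointwise_convexD)
  moreover have "re (u * (of_real a * x + of_real b * y)) = a * re (u * x) + b * re (u * y)"
    for u x y :: 'k and a b :: real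
  proof -
    have "u * (of_real a * x + of_real b * y) = of_real a * (u * x) + of_real b * (u * y)"
      by (simp add: algebra_simps)
    then show ?thesis
      by (simp only: linear_add[OF bounded_linear.linear[OF re]] bounded_linear_of_real_mult[OF re])
  qed
  then have "(\<lambda>i. of_real (1 - t) * real_coords re \<sigma>1 i + of_real t * real_coords re \<sigma>2 i)
               = real_coords re (\<lambda>A. of_real (1 - t) * \<sigma>1 A + of_real t * \<sigma>2 A)"
    by (auto simp: real_coords_def simp del: of_real_diff)
  ultimately show "(\<lambda>i. of_real (1 - t) * real_coords re \<sigma>1 i + of_real t * real_coords re \<sigma>2 i)
                     \<in> real_coords re ` P"
    by simp
qed

lemma real_coords_sum_scale:
  fixes re :: "'k::real_normed_field \<Rightarrow> real"
  assumes re: "bounded_linear re" and "\<sigma> \<in> tvs_dual smul T"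
  shows "re (\<sigma> (\<Sum>(A, u)\<in>I. smul (of_real (c (A, u)) * u) A)) = (\<Sum>i\<in>I. c i * real_coords re \<sigma> i)"
proof -
  have "\<sigma> (\<Sum>(A, u)\<in>I. smul (of_real (c (A, u)) * u) A) = (\<Sum>i\<in>I. of_real (c i) * (snd i * \<sigma> (fst i)))"
    unfolding case_prod_unfold tvs_dual_sum_scale[OF \<open>\<sigma> \<in> tvs_dual smul T\<close>] by (simp add: mult.assoc)
  then show ?thesis
    by (simp only: linear_sum[OF bounded_linear.linear[OF re]] bounded_linear_of_real_mult[OF re]
        real_coords_def case_prod_unfold)
qed

lemma norm_le_sq_dist_on_real_coords:
  assumes "real_part_frame re U" "finite J" "A \<in> J"
  shows "(norm (\<sigma> A - \<tau> A))\<^sup>2 \<le> sq_dist_on (J \<times> U) (real_coords re \<sigma>) (real_coords re \<tau>)"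
proof -
  have re: "linear re" and norm_eq: "\<And>z. (norm z)\<^sup>2 = (\<Sum>u\<in>U. (re (u * z))\<^sup>2)"
    using assms(1) by (auto simp: real_part_frame_def bounded_linear.linear)
  have "(norm (\<sigma> A - \<tau> A))\<^sup>2 = (\<Sum>u\<in>U. (real_coords re \<sigma> (A, u) - real_coords re \<tau> (A, u))\<^sup>2)"
    unfolding norm_eq real_coords_def by (simp add: right_diff_distrib linear_diff[OF re])
  also have "\<dots> \<le> (\<Sum>A'\<in>J. \<Sum>u\<in>U. (real_coords re \<sigma> (A', u) - real_coords re \<tau> (A', u))\<^sup>2)"
    using assms(2,3) by (intro member_le_sum sum_nonneg) auto
  also have "\<dots> = sq_dist_on (J \<times> U) (real_coords re \<sigma>) (real_coords re \<tau>)"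
    unfolding sq_dist_on_def by (simp add: sum.cartesian_product)
  finally show ?thesis .
qed

lemma real_coords_not_separated:
  fixes P :: "('a::ab_group_add \<Rightarrow> 'k::real_normed_field) set" and re :: "'k \<Rightarrow> real"
  assumes re: "bounded_linear re" and "P \<subseteq> tvs_dual smul T" "\<tau> \<in> tvs_dual smul T"
    and approx: "\<And>A \<eta>. \<eta> > 0 \<Longrightarrow> \<exists>\<sigma>\<in>P. norm (\<sigma> A - \<tau> A) < \<eta>"
    and "\<eta> > 0"
  shows "\<exists>y\<in>real_coords re ` P. -\<eta> \<le> (\<Sum>i\<in>I. c i * (y i - real_coords re \<tau> i))"
proof -
  obtain K where "K > 0" and K: "\<And>z. norm (re z) \<le> norm z * K"
    using bounded_linear.pos_bounded[OF re] by blast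
  txt \<open>The functional c on the coordinates of \<sigma> is evaluation of re \<circ> \<sigma> at a single vector.\<close>
  define B where "B = (\<Sum>(A, u)\<in>I. smul (of_real (c (A, u)) * u) A)"
  obtain \<sigma> where "\<sigma> \<in> P" and \<sigma>: "norm (\<sigma> B - \<tau> B) < \<eta> / K"
    using approx \<open>\<eta> > 0\<close> \<open>K > 0\<close> by (meson divide_pos_pos)
  then have "\<sigma> \<in> tvs_dual smul T" using \<open>P \<subseteq> tvs_dual smul T\<close> by blast
  then have "re (\<sigma> B - \<tau> B) = (\<Sum>i\<in>I. c i * (real_coords re \<sigma> i - real_coords re \<tau> i))"
    using \<open>\<tau> \<in> tvs_dual smul T\<close>
    by (simp add: B_def linear_diff[OF bounded_linear.linear[OF re]] real_coords_sum_scale[OF re]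
        right_diff_distrib sum_subtractf)
  moreover have "norm (re (\<sigma> B - \<tau> B)) < \<eta>"
    using K[of "\<sigma> B - \<tau> B"] \<sigma> \<open>K > 0\<close> by (simp add: pos_less_divide_eq)
  ultimately show ?thesis using \<open>\<sigma> \<in> P\<close> by (intro bexI[of _ "real_coords re \<sigma>"]) auto
qed

lemma tvs_dual_simultaneous_approx:
  fixes P :: "('a::ab_group_add \<Rightarrow> 'k::real_normed_field) set" and re :: "'k \<Rightarrow> real"
  assumes frame: "real_part_frame re U"
    and "P \<subseteq> tvs_dual smul T" "\<tau> \<in> tvs_dual smul T" "pointwise_convex P"
    and approx: "\<And>A \<eta>. \<eta> > 0 \<Longrightarrow> \<exists>\<sigma>\<in>P. norm (\<sigma> A - \<tau> A) < \<eta>"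
    and "finite J" "\<epsilon> > 0"
  obtains \<sigma> where "\<sigma> \<in> P" "\<And>A. A \<in> J \<Longrightarrow> norm (\<sigma> A - \<tau> A) < \<epsilon>"
proof -
  have re: "bounded_linear re" and "finite U"
    using frame by (auto simp: real_part_frame_def)
  then have fin: "finite (J \<times> U)" using \<open>finite J\<close> by simp
  have convex: "pointwise_convex (real_coords re ` P)"
    using re \<open>pointwise_convex P\<close> by (rule pointwise_convex_real_coords_image)
  have not_separated:
    "\<exists>y\<in>real_coords re ` P. -\<eta> \<le> (\<Sum>i\<in>J \<times> U. c i * (y i - real_coords re \<tau> i))"
    if "\<eta> > 0" for c \<eta>
    using re assms(2,3) approx that by (rule real_coords_not_separated)
  have "\<epsilon>\<^sup>2 > 0" using \<open>\<epsilon> > 0\<close> by simp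
  then obtain y where "y \<in> real_coords re ` P" "sq_dist_on (J \<times> U) y (real_coords re \<tau>) < \<epsilon>\<^sup>2"
    using pointwise_convex_approx_if_not_separated[OF fin convex not_separated] by blast
  then obtain \<sigma> where "\<sigma> \<in> P"
    and \<sigma>: "sq_dist_on (J \<times> U) (real_coords re \<sigma>) (real_coords re \<tau>) < \<epsilon>\<^sup>2"
    by blast
  have "norm (\<sigma> A - \<tau> A) < \<epsilon>" if "A \<in> J" for A
    using norm_le_sq_dist_on_real_coords[OF frame \<open>finite J\<close> that, of \<sigma> \<tau>] \<sigma> \<open>\<epsilon> > 0\<close>
    by (simp add: power2_less_imp_less)
  with \<open>\<sigma> \<in> P\<close> show thesis by (rule that)
qed

section \<open>Convex hulls of functionals\<close>

lemma sum_image_even_odd: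
  fixes g :: "nat \<Rightarrow> 'b::comm_monoid_add"
  assumes "finite I" "finite J"
  shows "(\<Sum>k\<in>(\<lambda>i. 2 * i) ` I \<union> (\<lambda>j. 2 * j + 1) ` J. g k) = (\<Sum>i\<in>I. g (2 * i)) + (\<Sum>j\<in>J. g (2 * j + 1))"
proof -
  have "(\<lambda>i. 2 * i) ` I \<inter> (\<lambda>j. 2 * j + 1) ` J = {}" by auto presburger
  then show ?thesis
    using assms by (simp add: sum.union_disjoint sum.reindex inj_on_def)
qed

lemma fun_convex_hullE:
  assumes "\<sigma> \<in> fun_convex_hull F"
  obtains I :: "nat set" and c s where "finite I" "\<And>i. i \<in> I \<Longrightarrow> 0 \<le> c i" "\<And>i. i \<in> I \<Longrightarrow> s i \<in> F"
    "sum c I = 1" "\<sigma> = (\<lambda>x. \<Sum>i\<in>I. of_real (c i) * s i x)"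
  using assms unfolding fun_convex_hull_def by blast

lemma fun_convex_hullI:
  "finite (I :: nat set) \<Longrightarrow> (\<And>i. i \<in> I \<Longrightarrow> 0 \<le> c i) \<Longrightarrow> (\<And>i. i \<in> I \<Longrightarrow> s i \<in> F) \<Longrightarrow>
     sum c I = 1 \<Longrightarrow> (\<lambda>x. \<Sum>i\<in>I. of_real (c i) * s i x) \<in> fun_convex_hull F"
  unfolding fun_convex_hull_def by blast

lemma pointwise_convex_fun_convex_hull: "pointwise_convex (fun_convex_hull F)"
  unfolding pointwise_convex_def
proof clarify
  fix x y and t :: real
  assume "x \<in> fun_convex_hull F" "y \<in> fun_convex_hull F" "0 \<le> t" "t \<le> 1"
  obtain I :: "nat set" and c s where I: "finite I" "\<And>i. i \<in> I \<Longrightarrow> 0 \<le> c i" "\<And>i. i \<in> I \<Longrightarrow> s i \<in> F"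
    "sum c I = 1" and x: "x = (\<lambda>A. \<Sum>i\<in>I. of_real (c i) * s i A)"
    using \<open>x \<in> fun_convex_hull F\<close> by (rule fun_convex_hullE) blast
  obtain J :: "nat set" and d r where J: "finite J" "\<And>j. j \<in> J \<Longrightarrow> 0 \<le> d j" "\<And>j. j \<in> J \<Longrightarrow> r j \<in> F"
    "sum d J = 1" and y: "y = (\<lambda>A. \<Sum>j\<in>J. of_real (d j) * r j A)"
    using \<open>y \<in> fun_convex_hull F\<close> by (rule fun_convex_hullE) blast
  define K where "K = (\<lambda>i. 2 * i) ` I \<union> (\<lambda>j. 2 * j + 1) ` J"
  define e where "e k = (if even k then (1 - t) * c (k div 2) else t * d (k div 2))" for k
  define q where "q k = (if even k then s (k div 2) else r (k div 2))" for k
  have "(\<lambda>A. \<Sum>k\<in>K. of_real (e k) * q k A) \<in> fun_convex_hull F"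
  proof (rule fun_convex_hullI)
    show "finite K" unfolding K_def using I(1) J(1) by simp
    show "0 \<le> e k" "q k \<in> F" if "k \<in> K" for k
      using that I J \<open>0 \<le> t\<close> \<open>t \<le> 1\<close> by (auto simp: K_def e_def q_def)
    show "sum e K = 1"
      unfolding K_def sum_image_even_odd[OF I(1) J(1)]
      using I(4) J(4) by (simp add: e_def sum_distrib_left[symmetric])
  qed
  moreover have "(\<lambda>A. \<Sum>k\<in>K. of_real (e k) * q k A) = (\<lambda>A. of_real (1 - t) * x A + of_real t * y A)"
    unfolding K_def sum_image_even_odd[OF I(1) J(1)]
    by (simp add: e_def q_def x y sum_distrib_left mult.assoc)
  ultimately show "(\<lambda>A. of_real (1 - t) * x A + of_real t * y A) \<in> fun_convex_hull F" by simp
qed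

lemma fun_convex_hull_subset_tvs_dual:
  fixes F :: "('a::ab_group_add \<Rightarrow> 'k::real_normed_field) set"
  assumes "F \<subseteq> tvs_dual smul T"
  shows "fun_convex_hull F \<subseteq> tvs_dual smul T"
proof
  fix \<sigma> assume "\<sigma> \<in> fun_convex_hull F"
  then obtain I :: "nat set" and c s where I: "finite I" "\<And>i. i \<in> I \<Longrightarrow> s i \<in> F" "sum c I = 1"
    and \<sigma>: "\<sigma> = (\<lambda>A. \<Sum>i\<in>I. of_real (c i) * s i A)"
    by (rule fun_convex_hullE) blast
  have s: "Vector_Spaces.linear smul (*) (s i)" "continuous_map T euclidean (s i)" if "i \<in> I" for i
    using I(2)[OF that] assms by (auto simp: tvs_dual_def)
  obtain i0 where "i0 \<in> I" using I(3) by (metis sum.empty zero_neq_one ex_in_conv)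
  have pair: "vector_space_pair smul ((*) :: 'k \<Rightarrow> 'k \<Rightarrow> 'k)"
    using s(1)[OF \<open>i0 \<in> I\<close>, unfolded Vector_Spaces.linear_iff] unfolding vector_space_pair_def by blast
  have "Vector_Spaces.linear smul (*) (\<lambda>A. of_real (c i) * s i A)" if "i \<in> I" for i
    using vector_space_pair.linear_compose_scale_right[OF pair s(1)[OF that]] .
  then have "Vector_Spaces.linear smul (*) \<sigma>"
    unfolding \<sigma> by (simp add: vector_space_pair.linear_compose_sum[OF pair])
  moreover have "continuous_map T euclidean \<sigma>"
  proof -
    have "continuous_map T euclidean (\<lambda>A. of_real (c i) * s i A)" if "i \<in> I" for i
      using continuous_map_compose[OF s(2)[OF that], of euclidean "\<lambda>z. of_real (c i) * z"]
      by (simp add: o_def continuous_map_iff_continuous2 continuous_intros)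
    then show ?thesis unfolding \<sigma> by (intro continuous_map_sum I(1))
  qed
  ultimately show "\<sigma> \<in> tvs_dual smul T" by (simp add: tvs_dual_def)
qed

lemma fun_convex_hull_approx:
  assumes approx: "\<And>\<tau> \<eta>. \<tau> \<in> G \<Longrightarrow> \<eta> > 0 \<Longrightarrow> \<exists>\<sigma>\<in>F. norm (\<sigma> A - \<tau> A) < \<eta>"
    and "\<tau> \<in> fun_convex_hull G" "\<eta> > 0"
  shows "\<exists>\<sigma>\<in>fun_convex_hull F. norm (\<sigma> A - \<tau> A) < \<eta>"
proof -
  obtain I :: "nat set" and c s where I: "finite I" "\<And>i. i \<in> I \<Longrightarrow> 0 \<le> c i"
    "\<And>i. i \<in> I \<Longrightarrow> s i \<in> G" "sum c I = 1" and \<tau>: "\<tau> = (\<lambda>x. \<Sum>i\<in>I. of_real (c i) * s i x)"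
    using \<open>\<tau> \<in> fun_convex_hull G\<close> by (rule fun_convex_hullE) blast
  have "\<forall>i\<in>I. \<exists>r\<in>F. norm (r A - s i A) < \<eta> / 2"
    using approx[OF _ half_gt_zero[OF \<open>\<eta> > 0\<close>]] I(3) by blast
  then obtain r where r: "\<And>i. i \<in> I \<Longrightarrow> r i \<in> F" "\<And>i. i \<in> I \<Longrightarrow> norm (r i A - s i A) < \<eta> / 2"
    by metis
  define \<sigma> where "\<sigma> = (\<lambda>x. \<Sum>i\<in>I. of_real (c i) * r i x)"
  have "\<sigma> \<in> fun_convex_hull F" unfolding \<sigma>_def using I(1,2) r(1) I(4) by (rule fun_convex_hullI)
  moreover have "norm (\<sigma> A - \<tau> A) < \<eta>"
  proof -
    have "norm (\<sigma> A - \<tau> A) = norm (\<Sum>i\<in>I. of_real (c i) * (r i A - s i A))"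
      by (simp add: \<sigma>_def \<tau> sum_subtractf[symmetric] right_diff_distrib)
    also have "\<dots> \<le> (\<Sum>i\<in>I. c i * norm (r i A - s i A))"
      using I(2) by (intro norm_sum[THEN order_trans] sum_mono) (simp add: norm_mult)
    also have "\<dots> \<le> (\<Sum>i\<in>I. c i * (\<eta> / 2))"
      using I(2) r(2) by (intro sum_mono mult_left_mono) (auto intro: less_imp_le)
    also have "\<dots> = \<eta> / 2" using I(4) by (simp only: sum_distrib_right[symmetric] mult_1)
    finally show ?thesis using \<open>\<eta> > 0\<close> by simp
  qed
  ultimately show ?thesis by blast
qed

section \<open>Weak* closures and the Hausdorff pseudo-distance\<close>

lemma open_fun_contains_finite_box:
  fixes U :: "('a \<Rightarrow> 'b::metric_space) set"
  assumes "open U" "f \<in> U"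
  obtains J \<epsilon> where "finite J" "\<epsilon> > 0" "\<And>g. (\<And>A. A \<in> J \<Longrightarrow> dist (g A) (f A) < \<epsilon>) \<Longrightarrow> g \<in> U"
proof -
  obtain V where V: "f \<in> Pi\<^sub>E UNIV V" "\<And>A. open (V A)" "finite {A. V A \<noteq> UNIV}" "Pi\<^sub>E UNIV V \<subseteq> U"
    using product_topology_open_contains_basis[of "\<lambda>_. euclidean" UNIV U f] assms
    by (auto simp: euclidean_product_topology)
  define J where "J = {A. V A \<noteq> UNIV}"
  have "\<forall>A\<in>J. \<exists>r>0. ball (f A) r \<subseteq> V A"
    using V(1,2) by (auto simp: PiE_iff open_contains_ball)
  then obtain r where r: "\<And>A. A \<in> J \<Longrightarrow> r A > 0 \<and> ball (f A) (r A) \<subseteq> V A" by metis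
  define \<epsilon> where "\<epsilon> = Min (insert 1 (r ` J))"
  have "finite J" unfolding J_def by (rule V(3))
  then have "\<epsilon> > 0" and \<epsilon>_le: "\<And>A. A \<in> J \<Longrightarrow> \<epsilon> \<le> r A"
    using r by (auto simp: \<epsilon>_def)
  have "g \<in> U" if g: "\<And>A. A \<in> J \<Longrightarrow> dist (g A) (f A) < \<epsilon>" for g
  proof -
    have "g A \<in> V A" for A
    proof (cases "A \<in> J")
      case True
      then show ?thesis using g[OF True] \<epsilon>_le[OF True] r[OF True] by (auto simp: dist_commute)
    qed (simp add: J_def)
    then show "g \<in> U" using V(4) by (auto simp: PiE_iff)
  qed
  with \<open>finite J\<close> \<open>\<epsilon> > 0\<close> show thesis by (rule that)
qed

lemma in_weak_star_closure_ofI: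
  assumes "P \<subseteq> tvs_dual smul T" "\<tau> \<in> tvs_dual smul T"
    and approx: "\<And>J \<epsilon>. finite J \<Longrightarrow> \<epsilon> > 0 \<Longrightarrow> \<exists>\<sigma>\<in>P. \<forall>A\<in>J. norm (\<sigma> A - \<tau> A) < \<epsilon>"
  shows "\<tau> \<in> weak_star_topology smul T closure_of P"
proof -
  have "\<tau> \<in> closure P"
    unfolding closure_iff_nhds_not_empty
  proof (intro allI impI)
    fix W U assume "U \<subseteq> W" "open U" "\<tau> \<in> U"
    obtain J \<epsilon> where "finite J" "\<epsilon> > 0"
      and box: "\<And>g. (\<And>A. A \<in> J \<Longrightarrow> dist (g A) (\<tau> A) < \<epsilon>) \<Longrightarrow> g \<in> U"
      using \<open>open U\<close> \<open>\<tau> \<in> U\<close> by (rule open_fun_contains_finite_box) blast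
    then obtain \<sigma> where "\<sigma> \<in> P" "\<forall>A\<in>J. norm (\<sigma> A - \<tau> A) < \<epsilon>" using approx by blast
    then have "\<sigma> \<in> U" by (intro box) (simp add: dist_norm)
    with \<open>\<sigma> \<in> P\<close> \<open>U \<subseteq> W\<close> show "P \<inter> W \<noteq> {}" by blast
  qed
  with assms(1,2) show ?thesis
    by (simp add: weak_star_topology_def euclidean_product_topology closure_of_subtopology Int_absorb1)
qed

lemma hausdorff_dist_at_commute: "hausdorff_dist_at A F G = hausdorff_dist_at A G F"
  unfolding hausdorff_dist_at_def by (simp add: norm_minus_commute max.commute)

lemma hausdorff_dist_at_zero_approx:
  assumes "hausdorff_dist_at A F G = 0" "\<tau> \<in> G" "\<eta> > 0"
  shows "\<exists>\<sigma>\<in>F. norm (\<sigma> A - \<tau> A) < \<eta>"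
proof -
  have "(INF \<sigma>\<in>F. ereal (norm (\<sigma> A - \<tau> A))) \<le> (SUP \<tau>\<in>G. INF \<sigma>\<in>F. ereal (norm (\<sigma> A - \<tau> A)))"
    using \<open>\<tau> \<in> G\<close> by (rule SUP_upper)
  also have "\<dots> \<le> 0" using assms(1) max.cobounded2 unfolding hausdorff_dist_at_def by metis
  also have "\<dots> < ereal \<eta>" using \<open>\<eta> > 0\<close> by simp
  finally show ?thesis by (auto simp: INF_less_iff)
qed

lemma closed_convex_hull_ws_subset_if_approx:
  fixes F G :: "('a::ab_group_add \<Rightarrow> 'k::real_normed_field) set" and re :: "'k \<Rightarrow> real"
  assumes "real_part_frame re U" "F \<subseteq> tvs_dual smul T" "G \<subseteq> tvs_dual smul T"
    and approx: "\<And>\<tau> A \<eta>. \<tau> \<in> G \<Longrightarrow> \<eta> > 0 \<Longrightarrow> \<exists>\<sigma>\<in>F. norm (\<sigma> A - \<tau> A) < \<eta>"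
  shows "closed_convex_hull_ws smul T G \<subseteq> closed_convex_hull_ws smul T F"
  unfolding closed_convex_hull_ws_def
proof (rule closure_of_minimal[OF _ closedin_closure_of], rule subsetI)
  fix \<tau> assume "\<tau> \<in> fun_convex_hull G"
  have hull_F: "fun_convex_hull F \<subseteq> tvs_dual smul T"
    using assms(2) by (rule fun_convex_hull_subset_tvs_dual)
  have "\<tau> \<in> tvs_dual smul T"
    using fun_convex_hull_subset_tvs_dual[OF assms(3)] \<open>\<tau> \<in> fun_convex_hull G\<close> by blast
  then show "\<tau> \<in> weak_star_topology smul T closure_of fun_convex_hull F"
  proof (rule in_weak_star_closure_ofI[OF hull_F])
    fix J :: "'a set" and \<epsilon> :: real assume "finite J" "\<epsilon> > 0"
    have hull_approx: "\<exists>\<sigma>\<in>fun_convex_hull F. norm (\<sigma> A - \<tau> A) < \<eta>" if "\<eta> > 0" for A \<eta>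
      using approx \<open>\<tau> \<in> fun_convex_hull G\<close> that by (rule fun_convex_hull_approx)
    obtain \<sigma> where "\<sigma> \<in> fun_convex_hull F" "\<And>A. A \<in> J \<Longrightarrow> norm (\<sigma> A - \<tau> A) < \<epsilon>"
      using tvs_dual_simultaneous_approx[OF assms(1) hull_F \<open>\<tau> \<in> tvs_dual smul T\<close>
          pointwise_convex_fun_convex_hull hull_approx \<open>finite J\<close> \<open>\<epsilon> > 0\<close>] by blast
    then show "\<exists>\<sigma>\<in>fun_convex_hull F. \<forall>A\<in>J. norm (\<sigma> A - \<tau> A) < \<epsilon>" by blast
  qed
qed

lemma closed_convex_hull_ws_eq_if_hausdorff_dist_at_zero:
  fixes F G :: "('a::ab_group_add \<Rightarrow> 'k::real_normed_field) set" and re :: "'k \<Rightarrow> real"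
  assumes "real_part_frame re U"
    and "closedin (weak_star_topology smul T) F" "closedin (weak_star_topology smul T) G"
    and dist: "\<And>A. hausdorff_dist_at A F G = 0"
  shows "closed_convex_hull_ws smul T F = closed_convex_hull_ws smul T G"
proof -
  have "F \<subseteq> tvs_dual smul T" "G \<subseteq> tvs_dual smul T"
    using assms(2,3) closedin_subset by (force simp: weak_star_topology_def)+
  moreover have "\<exists>\<sigma>\<in>F. norm (\<sigma> A - \<tau> A) < \<eta>" if "\<tau> \<in> G" "\<eta> > 0" for \<tau> A \<eta>
    using dist that by (rule hausdorff_dist_at_zero_approx)
  moreover have "\<exists>\<tau>\<in>G. norm (\<tau> A - \<sigma> A) < \<eta>" if "\<sigma> \<in> F" "\<eta> > 0" for \<sigma> A \<eta>
  proof (rule hausdorff_dist_at_zero_approx[OF _ that])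
    show "hausdorff_dist_at A G F = 0" by (simp only: hausdorff_dist_at_commute[of A G F] dist)
  qed
  ultimately show ?thesis
    using closed_convex_hull_ws_subset_if_approx[OF assms(1)] by (metis subset_antisym)
qed

theorem proposition3p10:
  fixes sR :: "real \<Rightarrow> 'a::ab_group_add \<Rightarrow> 'a" and TR :: "'a topology"
    and F1 F2 :: "('a \<Rightarrow> real) set"
    and sC :: "complex \<Rightarrow> 'b::ab_group_add \<Rightarrow> 'b" and TC :: "'b topology"
    and G1 G2 :: "('b \<Rightarrow> complex) set"
  shows "(tvs sR TR \<and> dual_separates_points sR TR \<and>
          F1 \<noteq> {} \<and> F2 \<noteq> {} \<and>
          closedin (weak_star_topology sR TR) F1 \<and> closedin (weak_star_topology sR TR) F2 \<and>
          (\<forall>A. hausdorff_dist_at A F1 F2 = 0)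
          \<longrightarrow> closed_convex_hull_ws sR TR F1 = closed_convex_hull_ws sR TR F2)
       \<and> (tvs sC TC \<and> dual_separates_points sC TC \<and>
          G1 \<noteq> {} \<and> G2 \<noteq> {} \<and>
          closedin (weak_star_topology sC TC) G1 \<and> closedin (weak_star_topology sC TC) G2 \<and>
          (\<forall>A. hausdorff_dist_at A G1 G2 = 0)
          \<longrightarrow> closed_convex_hull_ws sC TC G1 = closed_convex_hull_ws sC TC G2)"
  \<comment> \<open>Only weak*-closedness (placing the sets inside the dual) and d_H = 0 are needed.\<close>
  using closed_convex_hull_ws_eq_if_hausdorff_dist_at_zero[OF real_part_frame_real, of sR TR F1 F2]
    closed_convex_hull_ws_eq_if_hausdorff_dist_at_zero[OF real_part_frame_complex, of sC TC G1 G2]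
  by blast

end
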